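(* $M\otimes-$ is a functor on $\mathsf{SquaMS}$: for every square metric space $X$, the quotient distance on $M\otimes X$ is a metric, $(M\otimes X,S_{M\otimes X})$ is a square metric space, and for every morphism $f\colon X\to Y$ of $\mathsf{SquaMS}$, $M\otimes f$ is a morphism $M\otimes X\to M\otimes Y$; moreover identities and composition are preserved.
   Context: Let $M_0=\{(r,s)\in[0,1]^2: r\in\{0,1\}\text{ or } s\in\{0,1\}\}$. A square metric space is a pair $(X,S_X)$ with $X$ a metric space with all distances at most $2$ and $S_X\colon M_0\to X$ injective such that (sq1) for $i\in\{0,1\}$, $r,s\in[0,1]$: $d_X(S_X(i,r),S_X(i,s))=|s-r|$ and $d_X(S_X(r,i),S_X(s,i))=|s-r|$; (sq2) $d_X(S_X(r,s),S_X(t,u))\ge|r-t|+|s-u|$. $\mathsf{SquaMS}$: these objects, with short maps $f$ satisfying $f\circ S_X=S_Y$ as morphisms. Let $N=\{0,1,2\}^2$, $M=N\setminus\{(1,1)\}$, also viewed as points of $\mathbb{R}^2$. For $X$ in $\mathsf{SquaMS}$, $M\otimes X=(M\times X)/\!\sim$, where $\sim$ is the equivalence relation generated by $(m,S_X(p))\sim(n,S_X(q))$ whenever $m,n\in M$ differ by exactly $1$ in exactly one coordinate and $(m+p)/3=(n+q)/3$ in $\mathbb{R}^2$; $m\otimes x$ is the class of $(m,x)$. On $M\times X$ put $d((a,u),(b,v))=\frac13 d_X(u,v)$ if $a=b$ and $2$ otherwise; the quotient distance $d(m\otimes x,n\otimes y)$ is the infimum over finite sequences $(m,x)=z_0,\dots,z_k=(n,y)$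 in $M\times X$ of the sum over consecutive pairs of $0$ if they are $\sim$-related and $d(z_i,z_{i+1})$ otherwise. $S_{M\otimes X}(p)=m\otimes S_X(3p-m)$ for any $m\in M$ with $p\in(m+[0,1]^2)/3$, and $(M\otimes f)(m\otimes x)=m\otimes f(x)$. *)

theory Defs
  imports "HOL-Analysis.Analysis"
begin

type_synonym pt = "real \<times> real"

definition metric_on :: "'a set \<Rightarrow> ('a \<Rightarrow> 'a \<Rightarrow> real) \<Rightarrow> bool" where
  "metric_on X d \<longleftrightarrow>
     (\<forall>x\<in>X. \<forall>y\<in>X. 0 \<le> d x y \<and> d x y = d y x \<and> (d x y = 0 \<longleftrightarrow> x = y)) \<and>
     (\<forall>x\<in>X. \<forall>y\<in>X. \<forall>z\<in>X. d x z \<le> d x y + d y z)"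

definition M0 :: "pt set" where
  "M0 = {(r, s). 0 \<le> r \<and> r \<le> 1 \<and> 0 \<le> s \<and> s \<le> 1 \<and> (r \<in> {0, 1} \<or> s \<in> {0, 1})}"

definition squarems :: "'a set \<Rightarrow> ('a \<Rightarrow> 'a \<Rightarrow> real) \<Rightarrow> (pt \<Rightarrow> 'a) \<Rightarrow> bool" where
  "squarems X d S \<longleftrightarrow>
     metric_on X d \<and> (\<forall>x\<in>X. \<forall>y\<in>X. d x y \<le> 2) \<and>
     S ` M0 \<subseteq> X \<and> inj_on S M0 \<and>
     (\<forall>i\<in>{0, 1}. \<forall>r\<in>{0..1}. \<forall>s\<in>{0..1}.
        d (S (i, r)) (S (i, s)) = \<bar>s - r\<bar> \<and> d (S (r, i)) (S (s, i)) = \<bar>s - r\<bar>) \<and>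
     (\<forall>r s t u. (r, s) \<in> M0 \<longrightarrow> (t, u) \<in> M0 \<longrightarrow>
        \<bar>r - t\<bar> + \<bar>s - u\<bar> \<le> d (S (r, s)) (S (t, u)))"

definition squams_hom :: "'a set \<Rightarrow> ('a \<Rightarrow> 'a \<Rightarrow> real) \<Rightarrow> (pt \<Rightarrow> 'a) \<Rightarrow>
    'b set \<Rightarrow> ('b \<Rightarrow> 'b \<Rightarrow> real) \<Rightarrow> (pt \<Rightarrow> 'b) \<Rightarrow> ('a \<Rightarrow> 'b) \<Rightarrow> bool" where
  "squams_hom X dX SX Y dY SY f \<longleftrightarrow>
     f ` X \<subseteq> Y \<and> (\<forall>x\<in>X. \<forall>y\<in>X. dY (f x) (f y) \<le> dX x y) \<and>
     (\<forall>p\<in>M0. f (SX p) = SY p)"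

definition Mset :: "pt set" where
  "Mset = {(a, b). a \<in> {0, 1, 2} \<and> b \<in> {0, 1, 2}} - {(1, 1)}"

definition adjacent :: "pt \<Rightarrow> pt \<Rightarrow> bool" where
  "adjacent m n \<longleftrightarrow>
     (\<bar>fst m - fst n\<bar> = 1 \<and> snd m = snd n) \<or> (fst m = fst n \<and> \<bar>snd m - snd n\<bar> = 1)"

definition basic_rel :: "(pt \<Rightarrow> 'a) \<Rightarrow> ((pt \<times> 'a) \<times> (pt \<times> 'a)) set" where
  "basic_rel S = {((m, S p), (n, S q)) | m n p q.
      m \<in> Mset \<and> n \<in> Mset \<and> adjacent m n \<and> p \<in> M0 \<and> q \<in> M0 \<and>
      (fst m + fst p) / 3 = (fst n + fst q) / 3 \<and> (snd m + snd p) / 3 = (snd n + snd q) / 3}"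

definition tensor_rel :: "'a set \<Rightarrow> (pt \<Rightarrow> 'a) \<Rightarrow> ((pt \<times> 'a) \<times> (pt \<times> 'a)) set" where
  "tensor_rel X S = Id_on (Mset \<times> X) \<union> (basic_rel S \<union> (basic_rel S)\<inverse>)\<^sup>+"

definition tensor_carrier :: "'a set \<Rightarrow> (pt \<Rightarrow> 'a) \<Rightarrow> (pt \<times> 'a) set set" where
  "tensor_carrier X S = (Mset \<times> X) // tensor_rel X S"

definition tensor_class :: "'a set \<Rightarrow> (pt \<Rightarrow> 'a) \<Rightarrow> pt \<Rightarrow> 'a \<Rightarrow> (pt \<times> 'a) set" where
  "tensor_class X S m x = tensor_rel X S `` {(m, x)}"

definition pre_dist :: "('a \<Rightarrow> 'a \<Rightarrow> real) \<Rightarrow> pt \<times> 'a \<Rightarrow> pt \<times> 'a \<Rightarrow> real" where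
  "pre_dist d z w = (if fst z = fst w then d (snd z) (snd w) / 3 else 2)"

fun chain_cost :: "((pt \<times> 'a) \<times> (pt \<times> 'a)) set \<Rightarrow> ('a \<Rightarrow> 'a \<Rightarrow> real) \<Rightarrow> (pt \<times> 'a) list \<Rightarrow> real" where
  "chain_cost E d (a # b # zs) =
     (if (a, b) \<in> E then 0 else pre_dist d a b) + chain_cost E d (b # zs)"
| "chain_cost E d _ = 0"

definition rep_dist :: "'a set \<Rightarrow> ('a \<Rightarrow> 'a \<Rightarrow> real) \<Rightarrow> (pt \<Rightarrow> 'a) \<Rightarrow> pt \<times> 'a \<Rightarrow> pt \<times> 'a \<Rightarrow> real" where
  "rep_dist X d S z w = Inf {chain_cost (tensor_rel X S) d zs | zs.
      zs \<noteq> [] \<and> set zs \<subseteq> Mset \<times> X \<and> hd zs = z \<and> last zs = w}"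

definition tensor_dist :: "'a set \<Rightarrow> ('a \<Rightarrow> 'a \<Rightarrow> real) \<Rightarrow> (pt \<Rightarrow> 'a) \<Rightarrow>
    (pt \<times> 'a) set \<Rightarrow> (pt \<times> 'a) set \<Rightarrow> real" where
  "tensor_dist X d S c c' = rep_dist X d S (SOME z. z \<in> c) (SOME w. w \<in> c')"

definition cell :: "pt \<Rightarrow> pt set" where
  "cell m = {p. 0 \<le> 3 * fst p - fst m \<and> 3 * fst p - fst m \<le> 1 \<and>
               0 \<le> 3 * snd p - snd m \<and> 3 * snd p - snd m \<le> 1}"

definition tensor_S :: "'a set \<Rightarrow> (pt \<Rightarrow> 'a) \<Rightarrow> pt \<Rightarrow> (pt \<times> 'a) set" where
  "tensor_S X S p = (let m = (SOME m. m \<in> Mset \<and> p \<in> cell m)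
     in tensor_class X S m (S (3 * fst p - fst m, 3 * snd p - snd m)))"

definition tensor_map :: "'b set \<Rightarrow> (pt \<Rightarrow> 'b) \<Rightarrow> ('a \<Rightarrow> 'b) \<Rightarrow> (pt \<times> 'a) set \<Rightarrow> (pt \<times> 'b) set" where
  "tensor_map Y SY f c = (let z = (SOME z. z \<in> c) in tensor_class Y SY (fst z) (f (snd z)))"

end

theory Submission
  imports Defs
begin

text \<open>
  Symmetry and the triangle inequality for the quotient distance are inherited from chains;
  what needs work is separation and the lower bound (sq2) for \<open>M \<otimes> X\<close>.  Both come from
  test functions: a function on \<open>M \<times> X\<close> that agrees on glued pairs, takes values in \<open>[0, 2]\<close>
  and is \<open>d/3\<close>-Lipschitz on every copy of \<open>X\<close> is \<open>1\<close>-Lipschitz along every chain.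
  Extending the \<open>l1_dist\<close> distance to a fixed point of the square from the boundary \<open>S ` M0\<close>
  (McShane) gives (sq2) and separates boundary points with different positions in the unit
  square; boundary points with the same position are glued, directly or through the cell
  at a common corner.  A point off the boundary has positive distance from the compact
  boundary, and a bump function around it separates it from everything else.  The upper
  bound in (sq1) holds on each third of an edge, which lies in a single cell, and the
  triangle inequality assembles the thirds.  Finally \<open>M \<otimes> f\<close> maps chains to chains of
  no larger cost, which makes it short.
\<close>

section \<open>Chains\<close>

lemma chain_cost_append:
  "chain_cost E d (xs @ b # ys) = chain_cost E d (xs @ [b]) + chain_cost E d (b # ys)"
  by (induction xs rule: induct_list012) auto

lemma chain_cost_nonneg:
  assumes "\<And>a b. a \<in> set zs \<Longrightarrow> b \<in> set zs \<Longrightarrow> 0 \<le> pre_dist d a b"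
  shows "0 \<le> chain_cost E d zs"
  using assms by (induction zs rule: induct_list012) auto

lemma chain_cost_rev:
  assumes "sym E" and "\<And>a b. a \<in> set zs \<Longrightarrow> b \<in> set zs \<Longrightarrow> pre_dist d a b = pre_dist d b a"
  shows "chain_cost E d (rev zs) = chain_cost E d zs"
  using assms(2)
proof (induction zs rule: induct_list012)
  case (3 a b zs)
  have "chain_cost E d (rev (a # b # zs)) = chain_cost E d (rev zs @ [b]) + chain_cost E d [b, a]"
    using chain_cost_append[of E d "rev zs" b "[a]"] by simp
  also have "chain_cost E d [b, a] = chain_cost E d [a, b]"
    using "3.prems"[of a b] assms(1) by (auto dest: symD)
  finally show ?case
    using "3.IH" "3.prems" by simp
qed auto

lemma lipschitz_le_chain_cost:
  assumes "\<And>a b. (a, b) \<in> E \<Longrightarrow> \<phi> a = \<phi> b"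
    and "\<And>a b. a \<in> set zs \<Longrightarrow> b \<in> set zs \<Longrightarrow> \<bar>\<phi> a - \<phi> b\<bar> \<le> pre_dist d a b"
    and "zs \<noteq> []"
  shows "\<bar>\<phi> (hd zs) - \<phi> (last zs)\<bar> \<le> chain_cost E d zs"
  using assms(2,3)
proof (induction zs rule: induct_list012)
  case (3 a b zs)
  have "\<bar>\<phi> a - \<phi> b\<bar> \<le> (if (a, b) \<in> E then 0 else pre_dist d a b)"
    using assms(1)[of a b] "3.prems"(1)[of a b] by auto
  moreover have "\<bar>\<phi> b - \<phi> (last (b # zs))\<bar> \<le> chain_cost E d (b # zs)"
    using "3.IH"(2) "3.prems"(1) by simp
  ultimately show ?case by simp
qed auto

lemma trancl_Un_converse_map:
  assumes "\<And>a b. (a, b) \<in> B \<Longrightarrow> (g a, g b) \<in> B'" and "(a, b) \<in> (B \<union> B\<inverse>)\<^sup>+"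
  shows "(g a, g b) \<in> (B' \<union> B'\<inverse>)\<^sup>+"
  using assms(2)
proof (induction rule: trancl_induct)
  case (base y)
  then show ?case using assms(1) by blast
next
  case (step y z)
  then have "(g y, g z) \<in> B' \<union> B'\<inverse>" using assms(1) by blast
  with step.IH show ?case by (rule trancl_into_trancl)
qed

lemma le_abs_diff_on_union:
  fixes D :: "real \<Rightarrow> real \<Rightarrow> real"
  assumes "a \<le> b" and "b \<le> c"
    and sym: "\<And>r s. r \<in> {a..c} \<Longrightarrow> s \<in> {a..c} \<Longrightarrow> D r s = D s r"
    and tri: "\<And>r s t. r \<in> {a..c} \<Longrightarrow> s \<in> {a..c} \<Longrightarrow> t \<in> {a..c} \<Longrightarrow> D r t \<le> D r s + D s t"
    and left: "\<And>r s. r \<in> {a..b} \<Longrightarrow> s \<in> {a..b} \<Longrightarrow> D r s \<le> \<bar>r - s\<bar>"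
    and right: "\<And>r s. r \<in> {b..c} \<Longrightarrow> s \<in> {b..c} \<Longrightarrow> D r s \<le> \<bar>r - s\<bar>"
    and "r \<in> {a..c}" and "s \<in> {a..c}"
  shows "D r s \<le> \<bar>r - s\<bar>"
proof -
  have ordered: "D r s \<le> s - r" if "r \<le> s" "r \<in> {a..c}" "s \<in> {a..c}" for r s
  proof (cases "s \<le> b \<or> b \<le> r")
    case True
    then show ?thesis
      using left[of r s] right[of r s] that by auto
  next
    case False
    then have "D r s \<le> D r b + D b s"
      using tri[of r b s] that \<open>a \<le> b\<close> \<open>b \<le> c\<close> by auto
    also have "\<dots> \<le> (b - r) + (s - b)"
      using left[of r b] right[of b s] that False \<open>a \<le> b\<close> \<open>b \<le> c\<close> by auto
    finally show ?thesis
      by simp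
  qed
  show ?thesis
  proof (cases "r \<le> s")
    case True
    then show ?thesis
      using ordered[of r s] assms(7,8) by simp
  next
    case False
    then show ?thesis
      using ordered[of s r] sym[of r s] assms(7,8) by simp
  qed
qed

section \<open>The nine cells of the unit square\<close>

definition l1_dist :: "pt \<Rightarrow> pt \<Rightarrow> real" where
  "l1_dist P Q = \<bar>fst P - fst Q\<bar> + \<bar>snd P - snd Q\<bar>"

definition cell_pos :: "pt \<Rightarrow> pt \<Rightarrow> pt" where
  "cell_pos m p = ((fst m + fst p) / 3, (snd m + snd p) / 3)"

abbreviation local_coord :: "pt \<Rightarrow> pt \<Rightarrow> pt" where
  "local_coord m p \<equiv> (3 * fst p - fst m, 3 * snd p - snd m)"

lemma cell_pos_local_coord [simp]: "cell_pos m (local_coord m p) = p"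
  by (simp add: cell_pos_def)

lemma l1_dist_triangle: "l1_dist P Q \<le> l1_dist P R + l1_dist R Q"
  unfolding l1_dist_def by arith

lemma l1_dist_pos_iff: "0 < l1_dist P Q \<longleftrightarrow> P \<noteq> Q"
  unfolding l1_dist_def by (auto simp: prod_eq_iff)

lemma l1_dist_cell_pos: "l1_dist (cell_pos k p) (cell_pos k q) = l1_dist p q / 3"
  unfolding l1_dist_def cell_pos_def by (simp add: diff_divide_distrib[symmetric] add_divide_distrib)

lemma Mset_coords: "m \<in> Mset \<Longrightarrow> fst m \<in> {0, 1, 2} \<and> snd m \<in> {0, 1, 2} \<and> m \<noteq> (1, 1)"
  unfolding Mset_def by auto

lemma M0_coords:
  "p \<in> M0 \<Longrightarrow> fst p \<in> {0..1} \<and> snd p \<in> {0..1} \<and> (fst p \<in> {0, 1} \<or> snd p \<in> {0, 1})"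
  unfolding M0_def by auto

lemma cell_pos_in_unit_square:
  "m \<in> Mset \<Longrightarrow> p \<in> M0 \<Longrightarrow> fst (cell_pos m p) \<in> {0..1} \<and> snd (cell_pos m p) \<in> {0..1}"
  using Mset_coords[of m] M0_coords[of p] unfolding cell_pos_def by auto

lemma basic_relI:
  "m \<in> Mset \<Longrightarrow> n \<in> Mset \<Longrightarrow> adjacent m n \<Longrightarrow> p \<in> M0 \<Longrightarrow> q \<in> M0 \<Longrightarrow>
     cell_pos m p = cell_pos n q \<Longrightarrow> ((m, S p), (n, S q)) \<in> basic_rel S"
  unfolding basic_rel_def cell_pos_def by blast

lemma basic_relE:
  assumes "(a, b) \<in> basic_rel S"
  obtains m n p q where "a = (m, S p)" and "b = (n, S q)" and "m \<in> Mset" and "n \<in> Mset"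
    and "adjacent m n" and "p \<in> M0" and "q \<in> M0" and "cell_pos m p = cell_pos n q"
  using assms unfolding basic_rel_def cell_pos_def by auto

lemma common_corner_cell:
  assumes m: "m \<in> Mset" and n: "n \<in> Mset" and p: "p \<in> M0" and q: "q \<in> M0"
    and pos: "cell_pos m p = cell_pos n q" and "m \<noteq> n" and "\<not> adjacent m n"
  obtains k r where "k \<in> Mset" and "adjacent m k" and "adjacent k n" and "r \<in> M0"
    and "cell_pos k r = cell_pos m p"
proof -
  obtain a b c e where mn: "m = (a, b)" "n = (c, e)" by (cases m, cases n)
  obtain p1 p2 q1 q2 where pq: "p = (p1, p2)" "q = (q1, q2)" by (cases p, cases q)
  have E1: "a + p1 = c + q1" and E2: "b + p2 = e + q2"
    using pos by (simp_all add: cell_pos_def mn pq)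
  have ranges: "p1 \<in> {0..1}" "p2 \<in> {0..1}" "q1 \<in> {0..1}" "q2 \<in> {0..1}"
    using M0_coords p q pq by auto
  have grid: "a \<in> {0, 1, 2}" "b \<in> {0, 1, 2}" "c \<in> {0, 1, 2}" "e \<in> {0, 1, 2}"
    "(a, b) \<noteq> (1, 1)" "(c, e) \<noteq> (1, 1)"
    using Mset_coords[OF m] Mset_coords[OF n] unfolding mn by auto
  have "\<bar>a - c\<bar> \<le> 1" "\<bar>b - e\<bar> \<le> 1"
    using E1 E2 ranges by auto
  then have "\<bar>a - c\<bar> = 1 \<and> \<bar>b - e\<bar> = 1"
    using grid(1-4) assms(6,7) unfolding adjacent_def mn by auto
  then have corner: "p1 \<in> {0, 1}" "p2 \<in> {0, 1}" "q1 \<in> {0, 1}" "q2 \<in> {0, 1}"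
    using E1 E2 ranges by auto
  \<comment> \<open>Of the two other cells at the common corner, take one that is not the hole \<open>(1, 1)\<close>.\<close>
  define k where "k = (if (a, e) = (1, 1) then (c, b) else (a, e))"
  define r where "r = (if (a, e) = (1, 1) then (q1, p2) else (p1, q2))"
  show thesis
  proof
    show "k \<in> Mset" "adjacent m k" "adjacent k n"
      using \<open>\<bar>a - c\<bar> = 1 \<and> \<bar>b - e\<bar> = 1\<close> grid
      unfolding k_def Mset_def adjacent_def mn by auto
    show "r \<in> M0"
      using corner unfolding r_def M0_def by auto
    show "cell_pos k r = cell_pos m p"
      using E1 E2 unfolding k_def r_def cell_pos_def mn pq by auto
  qed
qed

lemma local_coord_bounds: "p \<in> cell m \<Longrightarrow> fst (local_coord m p) \<in> {0..1} \<and> snd (local_coord m p) \<in> {0..1}"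
  unfolding cell_def by auto

lemma local_coord_in_M0:
  assumes p: "p \<in> M0" and m: "m \<in> Mset" and "p \<in> cell m"
  shows "local_coord m p \<in> M0"
proof -
  have "fst (local_coord m p) \<in> {0, 1} \<or> snd (local_coord m p) \<in> {0, 1}"
    using M0_coords[OF p] Mset_coords[OF m] local_coord_bounds[OF \<open>p \<in> cell m\<close>] by auto
  then show ?thesis
    using local_coord_bounds[OF \<open>p \<in> cell m\<close>] unfolding M0_def by auto
qed

lemma M0_in_cell:
  assumes p: "p \<in> M0"
  obtains m where "m \<in> Mset" and "p \<in> cell m"
proof
  define third :: "real \<Rightarrow> real" where
    "third t = (if t \<le> 1/3 then 0 else if t \<le> 2/3 then 1 else 2)" for t
  show "(third (fst p), third (snd p)) \<in> Mset"
    using M0_coords[OF p] unfolding third_def Mset_def by auto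
  show "p \<in> cell (third (fst p), third (snd p))"
    using M0_coords[OF p] unfolding third_def cell_def by auto
qed

section \<open>The quotient distance\<close>

locale square_metric_space =
  fixes X :: "'a set" and d :: "'a \<Rightarrow> 'a \<Rightarrow> real" and S :: "pt \<Rightarrow> 'a"
  assumes squarems: "squarems X d S"
begin

abbreviation R where "R \<equiv> tensor_rel X S"
abbreviation qdist where "qdist \<equiv> rep_dist X d S"

lemma metric_on_X: "metric_on X d"
  using squarems unfolding squarems_def by simp

lemma d_nonneg: "x \<in> X \<Longrightarrow> y \<in> X \<Longrightarrow> 0 \<le> d x y"
  and d_sym: "x \<in> X \<Longrightarrow> y \<in> X \<Longrightarrow> d x y = d y x"
  and d_eq_0_iff: "x \<in> X \<Longrightarrow> y \<in> X \<Longrightarrow> d x y = 0 \<longleftrightarrow> x = y"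
  and d_triangle: "x \<in> X \<Longrightarrow> y \<in> X \<Longrightarrow> z \<in> X \<Longrightarrow> d x z \<le> d x y + d y z"
  using metric_on_X unfolding metric_on_def by simp_all

lemma d_self: "x \<in> X \<Longrightarrow> d x x = 0"
  using d_eq_0_iff by blast

lemma d_pos: "x \<in> X \<Longrightarrow> y \<in> X \<Longrightarrow> x \<noteq> y \<Longrightarrow> 0 < d x y"
  using d_nonneg d_eq_0_iff by force

lemma d_le_2: "x \<in> X \<Longrightarrow> y \<in> X \<Longrightarrow> d x y \<le> 2"
  using squarems unfolding squarems_def by simp

lemma S_in_X: "p \<in> M0 \<Longrightarrow> S p \<in> X"
  using squarems unfolding squarems_def by blast

lemma
  assumes "i \<in> {0, 1}" and "r \<in> {0..1}" and "s \<in> {0..1}"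
  shows d_S_vertical_edge: "d (S (i, r)) (S (i, s)) = \<bar>s - r\<bar>"
    and d_S_horizontal_edge: "d (S (r, i)) (S (s, i)) = \<bar>s - r\<bar>"
proof -
  have "\<forall>i\<in>{0, 1}. \<forall>r\<in>{0..1}. \<forall>s\<in>{0..1}.
      d (S (i, r)) (S (i, s)) = \<bar>s - r\<bar> \<and> d (S (r, i)) (S (s, i)) = \<bar>s - r\<bar>"
    using squarems unfolding squarems_def by (elim conjE) assumption
  then show "d (S (i, r)) (S (i, s)) = \<bar>s - r\<bar>" and "d (S (r, i)) (S (s, i)) = \<bar>s - r\<bar>"
    using assms by blast+
qed

lemma l1_dist_le_d_S: "p \<in> M0 \<Longrightarrow> q \<in> M0 \<Longrightarrow> l1_dist p q \<le> d (S p) (S q)"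
proof -
  have "\<forall>r s t u. (r, s) \<in> M0 \<longrightarrow> (t, u) \<in> M0 \<longrightarrow> \<bar>r - t\<bar> + \<bar>s - u\<bar> \<le> d (S (r, s)) (S (t, u))"
    using squarems unfolding squarems_def by (elim conjE) assumption
  then show "p \<in> M0 \<Longrightarrow> q \<in> M0 \<Longrightarrow> l1_dist p q \<le> d (S p) (S q)"
    unfolding l1_dist_def by (cases p; cases q) simp
qed

lemma pre_dist_nonneg: "a \<in> Mset \<times> X \<Longrightarrow> b \<in> Mset \<times> X \<Longrightarrow> 0 \<le> pre_dist d a b"
  unfolding pre_dist_def using d_nonneg by (auto simp: mem_Times_iff)

lemma pre_dist_sym: "a \<in> Mset \<times> X \<Longrightarrow> b \<in> Mset \<times> X \<Longrightarrow> pre_dist d a b = pre_dist d b a"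
  unfolding pre_dist_def using d_sym by (auto simp: mem_Times_iff)

lemma pre_dist_le_2: "a \<in> Mset \<times> X \<Longrightarrow> b \<in> Mset \<times> X \<Longrightarrow> pre_dist d a b \<le> 2"
  using d_le_2[of "snd a" "snd b"] unfolding pre_dist_def by (auto simp: mem_Times_iff)

lemma tensor_rel_equiv: "equiv (Mset \<times> X) R"
proof -
  let ?T = "(basic_rel S \<union> (basic_rel S)\<inverse>)\<^sup>+"
  have "basic_rel S \<union> (basic_rel S)\<inverse> \<subseteq> (Mset \<times> X) \<times> (Mset \<times> X)"
    unfolding basic_rel_def using S_in_X by auto
  then have T_sub: "?T \<subseteq> (Mset \<times> X) \<times> (Mset \<times> X)"
    by (rule trancl_subset_Sigma)
  have T_sym: "sym ?T"
    by (intro sym_trancl) (auto simp: sym_def)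
  show ?thesis
    unfolding tensor_rel_def
  proof (rule equivI)
    show "Id_on (Mset \<times> X) \<union> ?T \<subseteq> (Mset \<times> X) \<times> (Mset \<times> X)"
      using T_sub by auto
    show "refl_on (Mset \<times> X) (Id_on (Mset \<times> X) \<union> ?T)"
      by (auto simp: refl_on_def)
    show "sym (Id_on (Mset \<times> X) \<union> ?T)"
      using T_sym by (intro sym_Un) auto
    show "trans (Id_on (Mset \<times> X) \<union> ?T)"
      by (rule transI) (auto intro: trancl_trans)
  qed
qed

lemma tensor_rel_subset: "R \<subseteq> (Mset \<times> X) \<times> (Mset \<times> X)"
  using tensor_rel_equiv by (rule equiv_type)

lemma tensor_rel_refl: "z \<in> Mset \<times> X \<Longrightarrow> (z, z) \<in> R"
  unfolding tensor_rel_def by blast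

lemma tensor_rel_sym: "sym R"
  using tensor_rel_equiv by (rule equivE)

lemma basic_rel_subset_tensor_rel: "basic_rel S \<subseteq> R"
  unfolding tensor_rel_def by auto

lemma tensor_class_eq_iff:
  "z \<in> Mset \<times> X \<Longrightarrow> w \<in> Mset \<times> X \<Longrightarrow>
     tensor_class X S (fst z) (snd z) = tensor_class X S (fst w) (snd w) \<longleftrightarrow> (z, w) \<in> R"
  unfolding tensor_class_def using eq_equiv_class_iff[OF tensor_rel_equiv] by simp

lemma tensor_rel_invariant:
  assumes "\<And>a b. (a, b) \<in> basic_rel S \<Longrightarrow> \<phi> a = \<phi> b" and "(a, b) \<in> R"
  shows "\<phi> a = \<phi> b"
proof -
  have "(\<phi> a, \<phi> b) \<in> (Id \<union> Id\<inverse>)\<^sup>+" if "(a, b) \<in> (basic_rel S \<union> (basic_rel S)\<inverse>)\<^sup>+"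
    using trancl_Un_converse_map[OF _ that, of \<phi> Id] assms(1) by blast
  then show ?thesis
    using assms(2) unfolding tensor_rel_def by (auto simp: trancl_id trans_Id)
qed

lemma rep_dist_le_chain_cost:
  "zs \<noteq> [] \<Longrightarrow> set zs \<subseteq> Mset \<times> X \<Longrightarrow> qdist (hd zs) (last zs) \<le> chain_cost R d zs"
  unfolding rep_dist_def
  by (rule cInf_lower) (auto simp: bdd_below_def intro!: exI[of _ 0] chain_cost_nonneg pre_dist_nonneg)

lemma rep_dist_greatest:
  assumes "z \<in> Mset \<times> X" and "w \<in> Mset \<times> X"
    and "\<And>zs. zs \<noteq> [] \<Longrightarrow> set zs \<subseteq> Mset \<times> X \<Longrightarrow> hd zs = z \<Longrightarrow> last zs = w \<Longrightarrow> c \<le> chain_cost R d zs"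
  shows "c \<le> qdist z w"
  unfolding rep_dist_def
proof (rule cInf_greatest)
  show "{chain_cost R d zs |zs. zs \<noteq> [] \<and> set zs \<subseteq> Mset \<times> X \<and> hd zs = z \<and> last zs = w} \<noteq> {}"
    using assms(1,2) by (auto intro!: exI[of _ "[z, w]"])
qed (use assms(3) in blast)

lemma rep_dist_nonneg: "z \<in> Mset \<times> X \<Longrightarrow> w \<in> Mset \<times> X \<Longrightarrow> 0 \<le> qdist z w"
  by (rule rep_dist_greatest) (auto intro!: chain_cost_nonneg pre_dist_nonneg)

lemma rep_dist_le_step:
  "z \<in> Mset \<times> X \<Longrightarrow> w \<in> Mset \<times> X \<Longrightarrow> qdist z w \<le> (if (z, w) \<in> R then 0 else pre_dist d z w)"
  using rep_dist_le_chain_cost[of "[z, w]"] by simp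

lemma rep_dist_le_pre_dist: "z \<in> Mset \<times> X \<Longrightarrow> w \<in> Mset \<times> X \<Longrightarrow> qdist z w \<le> pre_dist d z w"
  using rep_dist_le_step[of z w] pre_dist_nonneg[of z w] by (simp split: if_splits)

lemma rep_dist_related:
  assumes "(z, w) \<in> R"
  shows "qdist z w = 0"
proof -
  have "z \<in> Mset \<times> X" and "w \<in> Mset \<times> X"
    using assms tensor_rel_subset by auto
  then show ?thesis
    using rep_dist_le_step[of z w] rep_dist_nonneg[of z w] assms by simp
qed

lemma rep_dist_le_2: "z \<in> Mset \<times> X \<Longrightarrow> w \<in> Mset \<times> X \<Longrightarrow> qdist z w \<le> 2"
  using rep_dist_le_pre_dist pre_dist_le_2 by (meson order_trans)

lemma rep_dist_sym:
  assumes "z \<in> Mset \<times> X" and "w \<in> Mset \<times> X"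
  shows "qdist z w = qdist w z"
proof -
  have le: "qdist z w \<le> qdist w z" if "z \<in> Mset \<times> X" "w \<in> Mset \<times> X" for z w
  proof (rule rep_dist_greatest[OF that(2,1)])
    fix zs assume zs: "zs \<noteq> []" "set zs \<subseteq> Mset \<times> X" "hd zs = w" "last zs = z"
    have "qdist z w \<le> chain_cost R d (rev zs)"
      using rep_dist_le_chain_cost[of "rev zs"] zs by (simp add: hd_rev last_rev)
    also have "\<dots> = chain_cost R d zs"
      using zs(2) by (intro chain_cost_rev tensor_rel_sym pre_dist_sym) auto
    finally show "qdist z w \<le> chain_cost R d zs" .
  qed
  show ?thesis
    using le[OF assms] le[OF assms(2,1)] by simp
qed

lemma rep_dist_triangle:
  assumes z: "z \<in> Mset \<times> X" and y: "y \<in> Mset \<times> X" and w: "w \<in> Mset \<times> X"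
  shows "qdist z w \<le> qdist z y + qdist y w"
proof -
  have concat: "qdist z w \<le> chain_cost R d xs + chain_cost R d ys"
    if xs: "xs \<noteq> []" "set xs \<subseteq> Mset \<times> X" "hd xs = z" "last xs = y"
      and ys: "ys \<noteq> []" "set ys \<subseteq> Mset \<times> X" "hd ys = y" "last ys = w" for xs ys
  proof -
    obtain xs' ys' where "xs = xs' @ [y]" and "ys = y # ys'"
      using xs ys by (metis append_butlast_last_id list.collapse)
    then show ?thesis
      using rep_dist_le_chain_cost[of "xs' @ y # ys'"] chain_cost_append[of R d xs' y ys'] xs ys
      by (auto simp: hd_append)
  qed
  have "qdist z w - chain_cost R d ys \<le> qdist z y"
    if ys: "ys \<noteq> []" "set ys \<subseteq> Mset \<times> X" "hd ys = y" "last ys = w" for ys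
  proof (rule rep_dist_greatest[OF z y])
    fix xs assume "xs \<noteq> []" "set xs \<subseteq> Mset \<times> X" "hd xs = z" "last xs = y"
    from concat[OF this ys] show "qdist z w - chain_cost R d ys \<le> chain_cost R d xs"
      by simp
  qed
  then have "qdist z w - qdist z y \<le> qdist y w"
    by (intro rep_dist_greatest[OF y w]) (simp add: algebra_simps)
  then show ?thesis
    by simp
qed

lemma rep_dist_respects:
  assumes "(z, z') \<in> R" and "(w, w') \<in> R"
  shows "qdist z w = qdist z' w'"
proof -
  have le: "qdist z w \<le> qdist z' w'" if zz': "(z, z') \<in> R" and ww': "(w, w') \<in> R" for z z' w w'
  proof -
    have dom: "z \<in> Mset \<times> X" "z' \<in> Mset \<times> X" "w \<in> Mset \<times> X" "w' \<in> Mset \<times> X"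
      using zz' ww' tensor_rel_subset by auto
    have "qdist z w \<le> qdist z z' + (qdist z' w' + qdist w' w)"
      using rep_dist_triangle[of z z' w] rep_dist_triangle[of z' w' w] dom by linarith
    also have "qdist z z' = 0"
      using zz' by (rule rep_dist_related)
    also have "qdist w' w = 0"
      using ww' tensor_rel_sym by (intro rep_dist_related) (rule symD)
    finally show ?thesis
      by simp
  qed
  have "(z', z) \<in> R" and "(w', w) \<in> R"
    using assms tensor_rel_sym by (auto dest: symD)
  then show ?thesis
    using le assms by (meson antisym)
qed

lemma tensor_dist_class:
  assumes z: "z \<in> Mset \<times> X" and w: "w \<in> Mset \<times> X"
  shows "tensor_dist X d S (tensor_class X S (fst z) (snd z)) (tensor_class X S (fst w) (snd w))
    = qdist z w"
proof -
  have some_rel: "(u, SOME u'. u' \<in> R `` {u}) \<in> R" if "u \<in> Mset \<times> X" for u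
    using someI[of "\<lambda>u'. u' \<in> R `` {u}" u] tensor_rel_refl[OF that] by blast
  show ?thesis
    unfolding tensor_dist_def tensor_class_def
    using rep_dist_respects[OF some_rel[OF z] some_rel[OF w]] by simp
qed

lemma test_function_le_rep_dist:
  assumes inv: "\<And>a b. (a, b) \<in> basic_rel S \<Longrightarrow> \<phi> a = \<phi> b"
    and range: "\<And>z. z \<in> Mset \<times> X \<Longrightarrow> \<phi> z \<in> {0..2}"
    and lip: "\<And>m x y. m \<in> Mset \<Longrightarrow> x \<in> X \<Longrightarrow> y \<in> X \<Longrightarrow> \<bar>\<phi> (m, x) - \<phi> (m, y)\<bar> \<le> d x y / 3"
    and z: "z \<in> Mset \<times> X" and w: "w \<in> Mset \<times> X"
  shows "\<bar>\<phi> z - \<phi> w\<bar> \<le> qdist z w"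
proof (rule rep_dist_greatest[OF z w])
  have pre: "\<bar>\<phi> a - \<phi> b\<bar> \<le> pre_dist d a b" if "a \<in> Mset \<times> X" "b \<in> Mset \<times> X" for a b
    using range[OF that(1)] range[OF that(2)] lip[of "fst a" "snd a" "snd b"] that
    by (cases a, cases b) (auto simp: pre_dist_def)
  fix zs assume zs: "zs \<noteq> []" "set zs \<subseteq> Mset \<times> X" "hd zs = z" "last zs = w"
  have "\<bar>\<phi> (hd zs) - \<phi> (last zs)\<bar> \<le> chain_cost R d zs"
  proof (rule lipschitz_le_chain_cost)
    show "\<phi> a = \<phi> b" if "(a, b) \<in> R" for a b
      using tensor_rel_invariant[OF inv that] .
    show "\<bar>\<phi> a - \<phi> b\<bar> \<le> pre_dist d a b" if "a \<in> set zs" "b \<in> set zs" for a b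
      using pre that zs(2) by blast
  qed (fact zs(1))
  with zs show "\<bar>\<phi> z - \<phi> w\<bar> \<le> chain_cost R d zs"
    by simp
qed

text \<open>McShane extension of \<open>G \<circ> S\<inverse>\<close> from \<open>S ` M0\<close> to \<open>X\<close>, capped so that its values
  stay in \<open>[0, 2]\<close>.\<close>
definition boundary_ext :: "(pt \<Rightarrow> real) \<Rightarrow> 'a \<Rightarrow> real" where
  "boundary_ext G x = min 2 (INF p\<in>M0. G p + d x (S p) / 3)"

lemma
  assumes G_range: "\<And>p. p \<in> M0 \<Longrightarrow> G p \<in> {0..2}"
    and G_lip: "\<And>p q. p \<in> M0 \<Longrightarrow> q \<in> M0 \<Longrightarrow> G p \<le> G q + d (S p) (S q) / 3"
  shows boundary_ext_S: "p \<in> M0 \<Longrightarrow> boundary_ext G (S p) = G p"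
    and boundary_ext_range: "x \<in> X \<Longrightarrow> boundary_ext G x \<in> {0..2}"
    and boundary_ext_lipschitz: "x \<in> X \<Longrightarrow> y \<in> X \<Longrightarrow> \<bar>boundary_ext G x - boundary_ext G y\<bar> \<le> d x y / 3"
proof -
  let ?I = "\<lambda>x. INF p\<in>M0. G p + d x (S p) / 3"
  have "(0, 0) \<in> M0"
    unfolding M0_def by simp
  then have ne: "M0 \<noteq> {}"
    by blast
  have terms_nonneg: "0 \<le> G p + d x (S p) / 3" if "x \<in> X" "p \<in> M0" for x p
    using G_range[OF that(2)] d_nonneg[OF that(1) S_in_X[OF that(2)]] by simp
  have I_le: "?I x \<le> G p + d x (S p) / 3" if "x \<in> X" "p \<in> M0" for x p
    by (rule cINF_lower) (use terms_nonneg that in \<open>auto intro!: bdd_belowI2\<close>)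
  have I_nonneg: "0 \<le> ?I x" if "x \<in> X" for x
    using terms_nonneg that ne by (intro cINF_greatest) auto
  have I_lip: "?I x \<le> ?I y + d x y / 3" if "x \<in> X" "y \<in> X" for x y
  proof -
    have "?I x - d x y / 3 \<le> ?I y"
    proof (rule cINF_greatest[OF ne])
      fix p assume p: "p \<in> M0"
      have "d x (S p) \<le> d x y + d y (S p)"
        using d_triangle that S_in_X[OF p] by blast
      then show "?I x - d x y / 3 \<le> G p + d y (S p) / 3"
        using I_le[OF that(1) p] by simp
    qed
    then show ?thesis
      by simp
  qed
  show "p \<in> M0 \<Longrightarrow> boundary_ext G (S p) = G p"
  proof -
    assume p: "p \<in> M0"
    have "?I (S p) \<le> G p"
      using I_le[OF S_in_X[OF p] p] d_self[OF S_in_X[OF p]] by simp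
    moreover have "G p \<le> ?I (S p)"
      using G_lip[OF p] ne by (intro cINF_greatest) auto
    ultimately show ?thesis
      unfolding boundary_ext_def using G_range[OF p] by simp
  qed
  show "x \<in> X \<Longrightarrow> boundary_ext G x \<in> {0..2}"
    using I_nonneg unfolding boundary_ext_def by simp
  show "\<bar>boundary_ext G x - boundary_ext G y\<bar> \<le> d x y / 3" if "x \<in> X" "y \<in> X"
  proof -
    have "?I x \<le> ?I y + d x y / 3" and "?I y \<le> ?I x + d x y / 3"
      using I_lip[OF that] I_lip[OF that(2,1)] d_sym[OF that] by auto
    then show ?thesis
      unfolding boundary_ext_def by linarith
  qed
qed

lemma l1_dist_cell_pos_le_rep_dist:
  assumes m: "m \<in> Mset" and n: "n \<in> Mset" and p: "p \<in> M0" and q: "q \<in> M0"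
  shows "l1_dist (cell_pos m p) (cell_pos n q) \<le> qdist (m, S p) (n, S q)"
proof -
  define G where "G k p' = l1_dist (cell_pos k p') (cell_pos n q)" for k p'
  define \<phi> where "\<phi> z = boundary_ext (G (fst z)) (snd z)" for z
  have G_range: "G k p' \<in> {0..2}" if "k \<in> Mset" "p' \<in> M0" for k p'
    using cell_pos_in_unit_square[OF that] cell_pos_in_unit_square[OF n q]
    unfolding G_def l1_dist_def by auto
  have G_lip: "G k p' \<le> G k q' + d (S p') (S q') / 3" if "p' \<in> M0" "q' \<in> M0" for k p' q'
    using l1_dist_triangle[of "cell_pos k p'" "cell_pos n q" "cell_pos k q'"]
      l1_dist_cell_pos[of k p' q'] l1_dist_le_d_S[OF that]
    unfolding G_def by simp
  have \<phi>_S: "\<phi> (k, S p') = G k p'" if "k \<in> Mset" "p' \<in> M0" for k p'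
    unfolding \<phi>_def using boundary_ext_S[OF G_range G_lip] that by simp
  have "\<bar>\<phi> (m, S p) - \<phi> (n, S q)\<bar> \<le> qdist (m, S p) (n, S q)"
  proof (rule test_function_le_rep_dist)
    show "\<phi> a = \<phi> b" if "(a, b) \<in> basic_rel S" for a b
      using that by (elim basic_relE) (simp add: \<phi>_S G_def)
    show "\<phi> z \<in> {0..2}" if "z \<in> Mset \<times> X" for z
      unfolding \<phi>_def using boundary_ext_range[OF G_range G_lip] that by (auto simp: mem_Times_iff)
    show "\<bar>\<phi> (k, x) - \<phi> (k, y)\<bar> \<le> d x y / 3" if "k \<in> Mset" "x \<in> X" "y \<in> X" for k x y
      unfolding \<phi>_def using boundary_ext_lipschitz[OF G_range G_lip] that by simp
  qed (use m n p q S_in_X in auto)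
  then show ?thesis
    using \<phi>_S[OF m p] \<phi>_S[OF n q] unfolding G_def l1_dist_def by simp
qed

lemma same_cell_pos_related:
  assumes m: "m \<in> Mset" and n: "n \<in> Mset" and p: "p \<in> M0" and q: "q \<in> M0"
    and pos: "cell_pos m p = cell_pos n q"
  shows "((m, S p), (n, S q)) \<in> R"
proof -
  consider "m = n" | "adjacent m n" | "m \<noteq> n" "\<not> adjacent m n"
    by blast
  then show ?thesis
  proof cases
    case 1
    then have "p = q"
      using pos by (auto simp: cell_pos_def prod_eq_iff)
    then show ?thesis
      using 1 m S_in_X[OF p] tensor_rel_refl by simp
  next
    case 2
    then show ?thesis
      using basic_relI[OF m n 2 p q pos] basic_rel_subset_tensor_rel by blast
  next
    case 3
    obtain k r where k: "k \<in> Mset" "adjacent m k" "adjacent k n" and r: "r \<in> M0"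
      and kr: "cell_pos k r = cell_pos m p"
      using common_corner_cell[OF m n p q pos 3] .
    have "((m, S p), (k, S r)) \<in> R" and "((k, S r), (n, S q)) \<in> R"
      using basic_relI[OF m k(1,2) p r] basic_relI[OF k(1) n k(3) r q] kr pos
        basic_rel_subset_tensor_rel by auto
    then show ?thesis
      using tensor_rel_equiv by (meson equivE transD)
  qed
qed

section \<open>Separation\<close>

lemma edge_dist_pos:
  assumes x: "x \<in> X" and x_off: "x \<notin> S ` M0" and e: "\<And>t. t \<in> {0..1} \<Longrightarrow> e t \<in> M0"
    and e_isom: "\<And>s t. s \<in> {0..1} \<Longrightarrow> t \<in> {0..1} \<Longrightarrow> d (S (e s)) (S (e t)) = \<bar>s - t\<bar>"
  shows "\<exists>\<epsilon>>0. \<forall>t\<in>{0..1}. \<epsilon> \<le> d x (S (e t))"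
proof -
  let ?h = "\<lambda>t. d x (S (e t))"
  have "1-lipschitz_on {0..1} ?h"
  proof (rule lipschitz_onI)
    fix s t :: real assume st: "s \<in> {0..1}" "t \<in> {0..1}"
    have "?h s \<le> ?h t + \<bar>s - t\<bar>" and "?h t \<le> ?h s + \<bar>s - t\<bar>"
      using d_triangle[of x "S (e t)" "S (e s)"] d_triangle[of x "S (e s)" "S (e t)"]
        e_isom[OF st(2,1)] e_isom[OF st] x S_in_X[OF e] st
      by (auto simp: abs_minus_commute)
    then show "dist (?h s) (?h t) \<le> 1 * dist s t"
      by (simp add: dist_real_def abs_le_iff)
  qed simp
  then have "continuous_on {0..1} ?h"
    by (rule lipschitz_on_continuous_on)
  then have "\<exists>t0\<in>{0..1}. \<forall>t\<in>{0..1}. ?h t0 \<le> ?h t"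
    by (intro continuous_attains_inf) auto
  then obtain t0 where t0: "t0 \<in> {0..1}" and min: "\<forall>t\<in>{0..1}. ?h t0 \<le> ?h t"
    by blast
  have "0 < ?h t0"
    using d_pos[OF x S_in_X[OF e[OF t0]]] x_off e[OF t0] by blast
  with min show ?thesis
    by blast
qed

lemma boundary_dist_pos:
  assumes x: "x \<in> X" and x_off: "x \<notin> S ` M0"
  shows "\<exists>\<epsilon>>0. \<forall>p\<in>M0. \<epsilon> \<le> d x (S p)"
proof -
  have vertical: "\<exists>\<epsilon>>0. \<forall>t\<in>{0..1}. \<epsilon> \<le> d x (S (i, t))" if i: "i \<in> {0, 1}" for i
    by (rule edge_dist_pos[OF x x_off])
      (use i d_S_vertical_edge[OF i] in \<open>auto simp: M0_def abs_minus_commute\<close>)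
  have horizontal: "\<exists>\<epsilon>>0. \<forall>t\<in>{0..1}. \<epsilon> \<le> d x (S (t, i))" if i: "i \<in> {0, 1}" for i
    by (rule edge_dist_pos[OF x x_off])
      (use i d_S_horizontal_edge[OF i] in \<open>auto simp: M0_def abs_minus_commute\<close>)
  obtain a0 a1 b0 b1 where pos: "a0 > 0" "a1 > 0" "b0 > 0" "b1 > 0"
    and a0: "\<forall>t\<in>{0..1}. a0 \<le> d x (S (0, t))" and a1: "\<forall>t\<in>{0..1}. a1 \<le> d x (S (1, t))"
    and b0: "\<forall>t\<in>{0..1}. b0 \<le> d x (S (t, 0))" and b1: "\<forall>t\<in>{0..1}. b1 \<le> d x (S (t, 1))"
    using vertical[of 0] vertical[of 1] horizontal[of 0] horizontal[of 1] by auto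
  have "min (min a0 a1) (min b0 b1) \<le> d x (S p)" if p: "p \<in> M0" for p
  proof -
    obtain p1 p2 where pp: "p = (p1, p2)"
      by (cases p)
    have "p1 \<in> {0..1}" "p2 \<in> {0..1}" "p1 \<in> {0, 1} \<or> p2 \<in> {0, 1}"
      using M0_coords[OF p] pp by auto
    then show ?thesis
      using a0 a1 b0 b1 unfolding pp by fastforce
  qed
  moreover have "min (min a0 a1) (min b0 b1) > 0"
    using pos by simp
  ultimately show ?thesis
    by blast
qed

lemma rep_dist_pos_off_boundary:
  assumes mx: "(m, x) \<in> Mset \<times> X" and x_off: "x \<notin> S ` M0" and w: "w \<in> Mset \<times> X"
    and not_rel: "((m, x), w) \<notin> R"
  shows "0 < qdist (m, x) w"
proof -
  have x: "x \<in> X"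
    using mx by simp
  obtain \<epsilon> where "\<epsilon> > 0" and \<epsilon>: "\<forall>p\<in>M0. \<epsilon> \<le> d x (S p)"
    using boundary_dist_pos[OF x x_off] by blast
  define h where "h = min (\<epsilon> / 3) 2"
  have h: "0 < h" "h \<le> 2"
    using \<open>\<epsilon> > 0\<close> unfolding h_def by auto
  \<comment> \<open>A bump at \<open>x\<close> in its own cell, vanishing near the boundary and hence on glued points.\<close>
  define \<phi> where "\<phi> z = (if fst z = m then max 0 (h - d (snd z) x / 3) else 0)" for z
  have \<phi>_boundary: "\<phi> (k, S p) = 0" if "p \<in> M0" for k p
  proof -
    have "\<epsilon> \<le> d x (S p)"
      using \<epsilon> that by blast
    then have "\<epsilon> \<le> d (S p) x"
      using d_sym[OF x S_in_X[OF that]] by simp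
    then have "h \<le> d (S p) x / 3"
      unfolding h_def by simp
    then show ?thesis
      unfolding \<phi>_def by simp
  qed
  have "\<bar>\<phi> (m, x) - \<phi> w\<bar> \<le> qdist (m, x) w"
  proof (rule test_function_le_rep_dist[OF _ _ _ mx w])
    show "\<phi> a = \<phi> b" if "(a, b) \<in> basic_rel S" for a b
      using that by (elim basic_relE) (simp add: \<phi>_boundary)
    show "\<phi> z \<in> {0..2}" if "z \<in> Mset \<times> X" for z
      using h d_nonneg[of "snd z" x] that x unfolding \<phi>_def by (auto simp: mem_Times_iff)
    show "\<bar>\<phi> (k, u) - \<phi> (k, v)\<bar> \<le> d u v / 3" if "k \<in> Mset" "u \<in> X" "v \<in> X" for k u v
    proof -
      have "d u x \<le> d u v + d v x" and "d v x \<le> d u v + d u x"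
        using d_triangle[of u v x] d_triangle[of v u x] d_sym[of u v] that x by auto
      then show ?thesis
        unfolding \<phi>_def by (auto simp: max_def abs_if)
    qed
  qed
  moreover have "\<phi> (m, x) = h"
    using d_self[OF x] h unfolding \<phi>_def by simp
  moreover have "\<phi> w < h"
  proof (cases "fst w = m")
    case True
    then have "snd w \<noteq> x"
      using not_rel tensor_rel_refl[OF mx] by (cases w) auto
    moreover have "snd w \<in> X"
      using w by (simp add: mem_Times_iff)
    ultimately have "0 < d (snd w) x"
      using d_pos x by blast
    then show ?thesis
      using True h unfolding \<phi>_def by simp
  next
    case False
    then show ?thesis
      using h unfolding \<phi>_def by simp
  qed
  ultimately show ?thesis
    by linarith
qed

lemma rep_dist_pos:
  assumes z: "z \<in> Mset \<times> X" and w: "w \<in> Mset \<times> X" and not_rel: "(z, w) \<notin> R"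
  shows "0 < qdist z w"
proof -
  obtain m x n y where zw: "z = (m, x)" "w = (n, y)"
    by (cases z, cases w)
  consider "x \<notin> S ` M0" | "y \<notin> S ` M0" | p q where "p \<in> M0" "q \<in> M0" "x = S p" "y = S q"
    by blast
  then show ?thesis
  proof cases
    case 1
    then show ?thesis
      using rep_dist_pos_off_boundary z w not_rel unfolding zw by blast
  next
    case 2
    have "(w, z) \<notin> R"
      using not_rel tensor_rel_sym by (auto dest: symD)
    then have "0 < qdist w z"
      using rep_dist_pos_off_boundary w z 2 unfolding zw by blast
    then show ?thesis
      using rep_dist_sym[OF z w] by simp
  next
    case 3
    have m: "m \<in> Mset" and n: "n \<in> Mset"
      using z w zw by auto
    have "cell_pos m p \<noteq> cell_pos n q"
      using same_cell_pos_related[OF m n 3(1,2)] not_rel unfolding zw 3 by blast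
    then have "0 < l1_dist (cell_pos m p) (cell_pos n q)"
      by (simp add: l1_dist_pos_iff)
    then show ?thesis
      using l1_dist_cell_pos_le_rep_dist[OF m n 3(1,2)] unfolding zw 3 by linarith
  qed
qed

lemma tensor_carrier_cases:
  assumes "c \<in> tensor_carrier X S"
  obtains z where "z \<in> Mset \<times> X" and "c = tensor_class X S (fst z) (snd z)"
  using assms unfolding tensor_carrier_def tensor_class_def by (auto elim!: quotientE)

lemma tensor_class_in_carrier:
  "z \<in> Mset \<times> X \<Longrightarrow> tensor_class X S (fst z) (snd z) \<in> tensor_carrier X S"
  unfolding tensor_carrier_def tensor_class_def by (auto intro!: quotientI)

lemma tensor_metric: "metric_on (tensor_carrier X S) (tensor_dist X d S)"
  unfolding metric_on_def
proof (intro conjI ballI)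
  fix c c' c'' assume c: "c \<in> tensor_carrier X S" and c': "c' \<in> tensor_carrier X S"
    and c'': "c'' \<in> tensor_carrier X S"
  obtain z where z: "z \<in> Mset \<times> X" "c = tensor_class X S (fst z) (snd z)"
    by (rule tensor_carrier_cases[OF c])
  obtain w where w: "w \<in> Mset \<times> X" "c' = tensor_class X S (fst w) (snd w)"
    by (rule tensor_carrier_cases[OF c'])
  obtain y where y: "y \<in> Mset \<times> X" "c'' = tensor_class X S (fst y) (snd y)"
    by (rule tensor_carrier_cases[OF c''])
  show "tensor_dist X d S c c'' \<le> tensor_dist X d S c c' + tensor_dist X d S c' c''"
    using rep_dist_triangle[OF z(1) w(1) y(1)]
    unfolding z(2) w(2) y(2) tensor_dist_class[OF z(1) y(1)] tensor_dist_class[OF z(1) w(1)]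
      tensor_dist_class[OF w(1) y(1)] .
next
  fix c c' assume c: "c \<in> tensor_carrier X S" and c': "c' \<in> tensor_carrier X S"
  obtain z where z: "z \<in> Mset \<times> X" "c = tensor_class X S (fst z) (snd z)"
    by (rule tensor_carrier_cases[OF c])
  obtain w where w: "w \<in> Mset \<times> X" "c' = tensor_class X S (fst w) (snd w)"
    by (rule tensor_carrier_cases[OF c'])
  note zw = z(1) w(1) and cls = z(2) w(2)
  show "0 \<le> tensor_dist X d S c c'"
    using rep_dist_nonneg[OF zw] unfolding cls tensor_dist_class[OF zw] .
  show "tensor_dist X d S c c' = tensor_dist X d S c' c"
    using rep_dist_sym[OF zw] unfolding cls tensor_dist_class[OF zw] tensor_dist_class[OF zw(2,1)] .
  have "qdist z w = 0 \<longleftrightarrow> (z, w) \<in> R"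
    using rep_dist_related rep_dist_pos[OF zw] by (cases "(z, w) \<in> R") auto
  then show "tensor_dist X d S c c' = 0 \<longleftrightarrow> c = c'"
    unfolding cls tensor_dist_class[OF zw] tensor_class_eq_iff[OF zw] .
qed

section \<open>The boundary of \<open>M \<otimes> X\<close>\<close>

lemma tensor_S_eq:
  assumes p: "p \<in> M0" and m: "m \<in> Mset" and "p \<in> cell m"
  shows "tensor_S X S p = tensor_class X S m (S (local_coord m p))"
proof -
  define m' where "m' = (SOME m. m \<in> Mset \<and> p \<in> cell m)"
  have m': "m' \<in> Mset" "p \<in> cell m'"
    using someI[of "\<lambda>m. m \<in> Mset \<and> p \<in> cell m" m] m \<open>p \<in> cell m\<close> unfolding m'_def by auto
  have coords: "local_coord m p \<in> M0" "local_coord m' p \<in> M0"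
    using local_coord_in_M0 p m m' \<open>p \<in> cell m\<close> by auto
  have "((m, S (local_coord m p)), (m', S (local_coord m' p))) \<in> R"
    by (rule same_cell_pos_related) (use m m' coords in auto)
  then have "tensor_class X S m (S (local_coord m p)) = tensor_class X S m' (S (local_coord m' p))"
    using tensor_class_eq_iff[of "(m, S (local_coord m p))" "(m', S (local_coord m' p))"]
      m m' coords S_in_X by auto
  then show ?thesis
    unfolding tensor_S_def m'_def[symmetric] Let_def by simp
qed

lemma tensor_S_in_carrier:
  assumes p: "p \<in> M0"
  shows "tensor_S X S p \<in> tensor_carrier X S"
proof -
  obtain m where m: "m \<in> Mset" "p \<in> cell m"
    by (rule M0_in_cell[OF p])
  have "(m, S (local_coord m p)) \<in> Mset \<times> X"
    using m local_coord_in_M0[OF p m] S_in_X by simp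
  then show ?thesis
    using tensor_class_in_carrier tensor_S_eq[OF p m] by fastforce
qed

lemma l1_dist_le_tensor_dist_S:
  assumes p: "p \<in> M0" and q: "q \<in> M0"
  shows "l1_dist p q \<le> tensor_dist X d S (tensor_S X S p) (tensor_S X S q)"
proof -
  obtain m where m: "m \<in> Mset" "p \<in> cell m"
    by (rule M0_in_cell[OF p])
  obtain n where n: "n \<in> Mset" "q \<in> cell n"
    by (rule M0_in_cell[OF q])
  have coords: "local_coord m p \<in> M0" "local_coord n q \<in> M0"
    using local_coord_in_M0 p q m n by auto
  have "l1_dist p q \<le> qdist (m, S (local_coord m p)) (n, S (local_coord n q))"
    using l1_dist_cell_pos_le_rep_dist[OF m(1) n(1) coords] by simp
  also have "\<dots> = tensor_dist X d S (tensor_S X S p) (tensor_S X S q)"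
    using tensor_dist_class[of "(m, S (local_coord m p))" "(n, S (local_coord n q))"]
      tensor_S_eq[OF p m] tensor_S_eq[OF q n] m n coords S_in_X by simp
  finally show ?thesis .
qed

lemma tensor_dist_S_same_cell:
  assumes p: "p \<in> M0" and q: "q \<in> M0" and m: "m \<in> Mset" and "p \<in> cell m" and "q \<in> cell m"
  shows "tensor_dist X d S (tensor_S X S p) (tensor_S X S q)
    \<le> d (S (local_coord m p)) (S (local_coord m q)) / 3"
proof -
  have coords: "local_coord m p \<in> M0" "local_coord m q \<in> M0"
    using local_coord_in_M0 assms by auto
  have "tensor_dist X d S (tensor_S X S p) (tensor_S X S q)
      = qdist (m, S (local_coord m p)) (m, S (local_coord m q))"
    using tensor_dist_class[of "(m, S (local_coord m p))" "(m, S (local_coord m q))"]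
      tensor_S_eq assms coords S_in_X by simp
  also have "\<dots> \<le> pre_dist d (m, S (local_coord m p)) (m, S (local_coord m q))"
    using m coords S_in_X by (intro rep_dist_le_pre_dist) auto
  finally show ?thesis
    by (simp add: pre_dist_def)
qed

lemma tensor_dist_S_vertical_third:
  assumes i: "i \<in> {0, 1}" and j: "j \<in> {0, 1, 2}"
    and r: "r \<in> {j / 3..(j + 1) / 3}" and s: "s \<in> {j / 3..(j + 1) / 3}"
  shows "tensor_dist X d S (tensor_S X S (i, r)) (tensor_S X S (i, s)) \<le> \<bar>r - s\<bar>"
proof -
  have local: "3 * r - j \<in> {0..1}" "3 * s - j \<in> {0..1}"
    using r s by (auto simp: field_simps)
  have on_edge: "(i, r) \<in> M0" "(i, s) \<in> M0"
    using i j local unfolding M0_def by auto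
  have m: "(2 * i, j) \<in> Mset"
    using i j unfolding Mset_def by auto
  have in_cell: "(i, r) \<in> cell (2 * i, j)" "(i, s) \<in> cell (2 * i, j)"
    using i local unfolding cell_def by auto
  have "tensor_dist X d S (tensor_S X S (i, r)) (tensor_S X S (i, s))
      \<le> d (S (i, 3 * r - j)) (S (i, 3 * s - j)) / 3"
    using tensor_dist_S_same_cell[OF on_edge m in_cell] by simp
  also have "\<dots> = \<bar>r - s\<bar>"
    using d_S_vertical_edge[OF i local] by (simp add: abs_if)
  finally show ?thesis .
qed

lemma tensor_dist_S_horizontal_third:
  assumes i: "i \<in> {0, 1}" and j: "j \<in> {0, 1, 2}"
    and r: "r \<in> {j / 3..(j + 1) / 3}" and s: "s \<in> {j / 3..(j + 1) / 3}"
  shows "tensor_dist X d S (tensor_S X S (r, i)) (tensor_S X S (s, i)) \<le> \<bar>r - s\<bar>"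
proof -
  have local: "3 * r - j \<in> {0..1}" "3 * s - j \<in> {0..1}"
    using r s by (auto simp: field_simps)
  have on_edge: "(r, i) \<in> M0" "(s, i) \<in> M0"
    using i j local unfolding M0_def by auto
  have m: "(j, 2 * i) \<in> Mset"
    using i j unfolding Mset_def by auto
  have in_cell: "(r, i) \<in> cell (j, 2 * i)" "(s, i) \<in> cell (j, 2 * i)"
    using i local unfolding cell_def by auto
  have "tensor_dist X d S (tensor_S X S (r, i)) (tensor_S X S (s, i))
      \<le> d (S (3 * r - j, i)) (S (3 * s - j, i)) / 3"
    using tensor_dist_S_same_cell[OF on_edge m in_cell] by simp
  also have "\<dots> = \<bar>r - s\<bar>"
    using d_S_horizontal_edge[OF i local] by (simp add: abs_if)
  finally show ?thesis .
qed

lemma tensor_dist_S_edge_le: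
  assumes E: "\<And>t. t \<in> {0..1} \<Longrightarrow> E t \<in> M0"
    and thirds: "\<And>j r s. j \<in> {0, 1, 2} \<Longrightarrow> r \<in> {j / 3..(j + 1) / 3} \<Longrightarrow> s \<in> {j / 3..(j + 1) / 3} \<Longrightarrow>
       tensor_dist X d S (tensor_S X S (E r)) (tensor_S X S (E s)) \<le> \<bar>r - s\<bar>"
    and r: "r \<in> {0..1}" and s: "s \<in> {0..1}"
  shows "tensor_dist X d S (tensor_S X S (E r)) (tensor_S X S (E s)) \<le> \<bar>r - s\<bar>"
proof -
  let ?D = "\<lambda>r s. tensor_dist X d S (tensor_S X S (E r)) (tensor_S X S (E s))"
  have in_carrier: "tensor_S X S (E t) \<in> tensor_carrier X S" if "t \<in> {0..1}" for t
    using tensor_S_in_carrier E that by blast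
  have sym: "?D r s = ?D s r" if "r \<in> {0..1}" "s \<in> {0..1}" for r s
    using tensor_metric in_carrier that unfolding metric_on_def by blast
  have tri: "?D r t \<le> ?D r s + ?D s t" if "r \<in> {0..1}" "s \<in> {0..1}" "t \<in> {0..1}" for r s t
    using tensor_metric in_carrier that unfolding metric_on_def by blast
  have first_two: "?D r s \<le> \<bar>r - s\<bar>" if "r \<in> {0..2/3}" "s \<in> {0..2/3}" for r s
  proof (rule le_abs_diff_on_union[of 0 "1/3" "2/3"])
    show "?D r s = ?D s r" if "r \<in> {0..2/3}" "s \<in> {0..2/3}" for r s
      using sym[of r s] that by simp
    show "?D r t \<le> ?D r s + ?D s t" if "r \<in> {0..2/3}" "s \<in> {0..2/3}" "t \<in> {0..2/3}" for r s t
      using tri[of r s t] that by simp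
    show "?D r s \<le> \<bar>r - s\<bar>" if "r \<in> {0..1/3}" "s \<in> {0..1/3}" for r s
      using thirds[of 0 r s] that by simp
    show "?D r s \<le> \<bar>r - s\<bar>" if "r \<in> {1/3..2/3}" "s \<in> {1/3..2/3}" for r s
      using thirds[of 1 r s] that by simp
  qed (use that in auto)
  show ?thesis
  proof (rule le_abs_diff_on_union[of 0 "2/3" 1])
    show "?D r s \<le> \<bar>r - s\<bar>" if "r \<in> {2/3..1}" "s \<in> {2/3..1}" for r s
      using thirds[of 2 r s] that by simp
  qed (use r s sym tri first_two in auto)
qed

lemma tensor_squarems: "squarems (tensor_carrier X S) (tensor_dist X d S) (tensor_S X S)"
  unfolding squarems_def
proof (intro conjI ballI allI impI)
  show "metric_on (tensor_carrier X S) (tensor_dist X d S)"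
    by (rule tensor_metric)
  show "tensor_dist X d S c c' \<le> 2"
    if c: "c \<in> tensor_carrier X S" and c': "c' \<in> tensor_carrier X S" for c c'
  proof -
    obtain z where z: "z \<in> Mset \<times> X" "c = tensor_class X S (fst z) (snd z)"
      by (rule tensor_carrier_cases[OF c])
    obtain w where w: "w \<in> Mset \<times> X" "c' = tensor_class X S (fst w) (snd w)"
      by (rule tensor_carrier_cases[OF c'])
    show ?thesis
      using rep_dist_le_2[OF z(1) w(1)] unfolding z(2) w(2) tensor_dist_class[OF z(1) w(1)] .
  qed
  show "tensor_S X S ` M0 \<subseteq> tensor_carrier X S"
    using tensor_S_in_carrier by blast
  show "inj_on (tensor_S X S) M0"
  proof (rule inj_onI)
    fix p q assume p: "p \<in> M0" and q: "q \<in> M0" and eq: "tensor_S X S p = tensor_S X S q"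
    have "tensor_dist X d S (tensor_S X S p) (tensor_S X S q) = 0"
      using tensor_metric tensor_S_in_carrier[OF q] eq unfolding metric_on_def by simp
    then have "\<not> 0 < l1_dist p q"
      using l1_dist_le_tensor_dist_S[OF p q] by simp
    then show "p = q"
      by (simp add: l1_dist_pos_iff)
  qed
  fix i r s :: real
  assume i: "i \<in> {0, 1}" and r: "r \<in> {0..1}" and s: "s \<in> {0..1}"
  have M0: "(i, r) \<in> M0" "(i, s) \<in> M0" "(r, i) \<in> M0" "(s, i) \<in> M0"
    using i r s unfolding M0_def by auto
  have "tensor_dist X d S (tensor_S X S (i, r)) (tensor_S X S (i, s)) \<le> \<bar>r - s\<bar>"
  proof (rule tensor_dist_S_edge_le[where E = "\<lambda>t. (i, t)", OF _ _ r s])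
    show "(i, t) \<in> M0" if "t \<in> {0..1}" for t
      using i that unfolding M0_def by auto
  qed (rule tensor_dist_S_vertical_third[OF i])
  moreover have "\<bar>r - s\<bar> \<le> tensor_dist X d S (tensor_S X S (i, r)) (tensor_S X S (i, s))"
    using l1_dist_le_tensor_dist_S[OF M0(1,2)] by (simp add: l1_dist_def)
  ultimately show "tensor_dist X d S (tensor_S X S (i, r)) (tensor_S X S (i, s)) = \<bar>s - r\<bar>"
    by (simp add: abs_minus_commute)
  have "tensor_dist X d S (tensor_S X S (r, i)) (tensor_S X S (s, i)) \<le> \<bar>r - s\<bar>"
  proof (rule tensor_dist_S_edge_le[where E = "\<lambda>t. (t, i)", OF _ _ r s])
    show "(t, i) \<in> M0" if "t \<in> {0..1}" for t
      using i that unfolding M0_def by auto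
  qed (rule tensor_dist_S_horizontal_third[OF i])
  moreover have "\<bar>r - s\<bar> \<le> tensor_dist X d S (tensor_S X S (r, i)) (tensor_S X S (s, i))"
    using l1_dist_le_tensor_dist_S[OF M0(3,4)] by (simp add: l1_dist_def)
  ultimately show "tensor_dist X d S (tensor_S X S (r, i)) (tensor_S X S (s, i)) = \<bar>s - r\<bar>"
    by (simp add: abs_minus_commute)
next
  fix r s t u :: real
  assume "(r, s) \<in> M0" "(t, u) \<in> M0"
  then show "\<bar>r - t\<bar> + \<bar>s - u\<bar> \<le> tensor_dist X d S (tensor_S X S (r, s)) (tensor_S X S (t, u))"
    using l1_dist_le_tensor_dist_S[of "(r, s)" "(t, u)"] unfolding l1_dist_def by simp
qed

end

section \<open>Functoriality\<close>

lemma squams_hom_id: "squams_hom X d S X d S id"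
  unfolding squams_hom_def by simp

lemma squams_hom_comp:
  assumes "squams_hom X dX SX Y dY SY f" and "squams_hom Y dY SY Z dZ SZ g"
  shows "squams_hom X dX SX Z dZ SZ (g \<circ> f)"
proof -
  have f: "f ` X \<subseteq> Y" "\<And>x y. x \<in> X \<Longrightarrow> y \<in> X \<Longrightarrow> dY (f x) (f y) \<le> dX x y"
    "\<And>p. p \<in> M0 \<Longrightarrow> f (SX p) = SY p"
    using assms(1) unfolding squams_hom_def by auto
  have g: "g ` Y \<subseteq> Z" "\<And>x y. x \<in> Y \<Longrightarrow> y \<in> Y \<Longrightarrow> dZ (g x) (g y) \<le> dY x y"
    "\<And>p. p \<in> M0 \<Longrightarrow> g (SY p) = SZ p"
    using assms(2) unfolding squams_hom_def by auto
  have "dZ (g (f x)) (g (f y)) \<le> dX x y" if "x \<in> X" "y \<in> X" for x y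
    using g(2)[of "f x" "f y"] f(1,2) that by (meson image_subset_iff order_trans)
  moreover have "(g \<circ> f) ` X \<subseteq> Z"
    using f(1) g(1) by (auto simp: image_subset_iff)
  ultimately show ?thesis
    unfolding squams_hom_def using f(3) g(3) by simp
qed

locale square_hom =
  dom: square_metric_space X dX SX + cod: square_metric_space Y dY SY
  for X :: "'a set" and dX SX and Y :: "'b set" and dY SY +
  fixes f :: "'a \<Rightarrow> 'b"
  assumes hom: "squams_hom X dX SX Y dY SY f"
begin

lemma f_in_Y: "x \<in> X \<Longrightarrow> f x \<in> Y"
  using hom unfolding squams_hom_def by auto

lemma f_short: "x \<in> X \<Longrightarrow> y \<in> X \<Longrightarrow> dY (f x) (f y) \<le> dX x y"
  using hom unfolding squams_hom_def by auto

lemma f_S: "p \<in> M0 \<Longrightarrow> f (SX p) = SY p"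
  using hom unfolding squams_hom_def by auto

lemma apsnd_in: "z \<in> Mset \<times> X \<Longrightarrow> apsnd f z \<in> Mset \<times> Y"
  using f_in_Y by (cases z) auto

lemma basic_rel_apsnd:
  assumes "(a, b) \<in> basic_rel SX"
  shows "(apsnd f a, apsnd f b) \<in> basic_rel SY"
  using assms
proof (rule basic_relE)
  fix m n p q
  assume "a = (m, SX p)" "b = (n, SX q)" "m \<in> Mset" "n \<in> Mset" "adjacent m n" "p \<in> M0" "q \<in> M0"
    "cell_pos m p = cell_pos n q"
  then show ?thesis
    using basic_relI[of m n p q SY] f_S by simp
qed

lemma tensor_rel_apsnd:
  assumes "(a, b) \<in> tensor_rel X SX"
  shows "(apsnd f a, apsnd f b) \<in> tensor_rel Y SY"
proof -
  have "(a, b) \<in> Id_on (Mset \<times> X) \<or> (a, b) \<in> (basic_rel SX \<union> (basic_rel SX)\<inverse>)\<^sup>+"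
    using assms unfolding tensor_rel_def by blast
  then show ?thesis
  proof
    assume "(a, b) \<in> Id_on (Mset \<times> X)"
    then have "a = b" and "a \<in> Mset \<times> X"
      by auto
    then show ?thesis
      using cod.tensor_rel_refl[OF apsnd_in] by simp
  next
    assume ab: "(a, b) \<in> (basic_rel SX \<union> (basic_rel SX)\<inverse>)\<^sup>+"
    have "(apsnd f a, apsnd f b) \<in> (basic_rel SY \<union> (basic_rel SY)\<inverse>)\<^sup>+"
      using basic_rel_apsnd ab by (rule trancl_Un_converse_map)
    then show ?thesis
      unfolding tensor_rel_def by blast
  qed
qed

lemma tensor_map_class:
  assumes m: "m \<in> Mset" and x: "x \<in> X"
  shows "tensor_map Y SY f (tensor_class X SX m x) = tensor_class Y SY m (f x)"
proof -
  define z where "z = (SOME z. z \<in> tensor_class X SX m x)"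
  have "(m, x) \<in> tensor_class X SX m x"
    unfolding tensor_class_def using dom.tensor_rel_refl m x by simp
  then have "z \<in> tensor_class X SX m x"
    unfolding z_def by (rule someI)
  then have rel: "((m, x), z) \<in> tensor_rel X SX"
    unfolding tensor_class_def by simp
  then have "((m, f x), apsnd f z) \<in> tensor_rel Y SY"
    using tensor_rel_apsnd[OF rel] by simp
  moreover have "(m, f x) \<in> Mset \<times> Y" and "apsnd f z \<in> Mset \<times> Y"
    using m f_in_Y[OF x] apsnd_in rel dom.tensor_rel_subset by auto
  ultimately have "tensor_class Y SY m (f x) = tensor_class Y SY (fst z) (f (snd z))"
    using cod.tensor_class_eq_iff[of "(m, f x)" "apsnd f z"] by simp
  then show ?thesis
    unfolding tensor_map_def z_def Let_def by simp
qed

lemma tensor_map_class_apsnd: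
  "z \<in> Mset \<times> X \<Longrightarrow>
    tensor_map Y SY f (tensor_class X SX (fst z) (snd z)) = tensor_class Y SY (fst (apsnd f z)) (snd (apsnd f z))"
  using tensor_map_class by (auto simp: mem_Times_iff)

lemma chain_cost_apsnd_le:
  "set zs \<subseteq> Mset \<times> X \<Longrightarrow>
    chain_cost (tensor_rel Y SY) dY (map (apsnd f) zs) \<le> chain_cost (tensor_rel X SX) dX zs"
proof (induction zs rule: induct_list012)
  case (3 a b zs)
  have ab: "a \<in> Mset \<times> X" "b \<in> Mset \<times> X"
    using "3.prems" by auto
  have "(if (apsnd f a, apsnd f b) \<in> tensor_rel Y SY then 0 else pre_dist dY (apsnd f a) (apsnd f b))
      \<le> (if (a, b) \<in> tensor_rel X SX then 0 else pre_dist dX a b)"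
  proof (cases "(a, b) \<in> tensor_rel X SX")
    case True
    then show ?thesis
      using tensor_rel_apsnd by simp
  next
    case False
    have "pre_dist dY (apsnd f a) (apsnd f b) \<le> pre_dist dX a b"
      using f_short[of "snd a" "snd b"] ab by (auto simp: pre_dist_def mem_Times_iff)
    then show ?thesis
      using False cod.pre_dist_nonneg[OF apsnd_in[OF ab(1)] apsnd_in[OF ab(2)]] by simp
  qed
  moreover have "chain_cost (tensor_rel Y SY) dY (map (apsnd f) (b # zs))
      \<le> chain_cost (tensor_rel X SX) dX (b # zs)"
    using "3.IH"(2) "3.prems" by simp
  ultimately show ?case
    by simp
qed auto

lemma tensor_map_hom:
  "squams_hom (tensor_carrier X SX) (tensor_dist X dX SX) (tensor_S X SX)
     (tensor_carrier Y SY) (tensor_dist Y dY SY) (tensor_S Y SY) (tensor_map Y SY f)"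
  unfolding squams_hom_def
proof (intro conjI ballI subsetI)
  fix c' assume "c' \<in> tensor_map Y SY f ` tensor_carrier X SX"
  then obtain c where c: "c \<in> tensor_carrier X SX" and c': "c' = tensor_map Y SY f c"
    by blast
  obtain z where z: "z \<in> Mset \<times> X" "c = tensor_class X SX (fst z) (snd z)"
    by (rule dom.tensor_carrier_cases[OF c])
  show "c' \<in> tensor_carrier Y SY"
    using cod.tensor_class_in_carrier[OF apsnd_in[OF z(1)]] tensor_map_class_apsnd[OF z(1)] c' z(2) by simp
next
  fix c c' assume c: "c \<in> tensor_carrier X SX" and c': "c' \<in> tensor_carrier X SX"
  obtain z where z: "z \<in> Mset \<times> X" "c = tensor_class X SX (fst z) (snd z)"
    by (rule dom.tensor_carrier_cases[OF c])
  obtain w where w: "w \<in> Mset \<times> X" "c' = tensor_class X SX (fst w) (snd w)"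
    by (rule dom.tensor_carrier_cases[OF c'])
  have "cod.qdist (apsnd f z) (apsnd f w) \<le> dom.qdist z w"
  proof (rule dom.rep_dist_greatest[OF z(1) w(1)])
    fix zs assume zs: "zs \<noteq> []" "set zs \<subseteq> Mset \<times> X" "hd zs = z" "last zs = w"
    have "set (map (apsnd f) zs) \<subseteq> Mset \<times> Y"
      using zs(2) apsnd_in by auto
    then have "cod.qdist (apsnd f z) (apsnd f w) \<le> chain_cost (tensor_rel Y SY) dY (map (apsnd f) zs)"
      using cod.rep_dist_le_chain_cost[of "map (apsnd f) zs"] zs(1,3,4) by (simp add: hd_map last_map)
    also have "\<dots> \<le> chain_cost (tensor_rel X SX) dX zs"
      by (rule chain_cost_apsnd_le[OF zs(2)])
    finally show "cod.qdist (apsnd f z) (apsnd f w) \<le> chain_cost (tensor_rel X SX) dX zs" .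
  qed
  then show "tensor_dist Y dY SY (tensor_map Y SY f c) (tensor_map Y SY f c') \<le> tensor_dist X dX SX c c'"
    unfolding z(2) w(2) tensor_map_class_apsnd[OF z(1)] tensor_map_class_apsnd[OF w(1)]
      cod.tensor_dist_class[OF apsnd_in[OF z(1)] apsnd_in[OF w(1)]] dom.tensor_dist_class[OF z(1) w(1)] .
next
  fix p assume p: "p \<in> M0"
  obtain m where m: "m \<in> Mset" "p \<in> cell m"
    by (rule M0_in_cell[OF p])
  have coord: "local_coord m p \<in> M0"
    using local_coord_in_M0[OF p m] .
  have "tensor_map Y SY f (tensor_S X SX p) = tensor_class Y SY m (f (SX (local_coord m p)))"
    using dom.tensor_S_eq[OF p m] tensor_map_class[OF m(1) dom.S_in_X[OF coord]] by simp
  also have "\<dots> = tensor_S Y SY p"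
    using cod.tensor_S_eq[OF p m] f_S[OF coord] by simp
  finally show "tensor_map Y SY f (tensor_S X SX p) = tensor_S Y SY p" .
qed

end

lemma square_homI:
  "squarems X dX SX \<Longrightarrow> squarems Y dY SY \<Longrightarrow> squams_hom X dX SX Y dY SY f \<Longrightarrow>
     square_hom X dX SX Y dY SY f"
  by (simp add: square_hom_def square_hom_axioms_def square_metric_space_def)

lemma tensor_map_id:
  assumes "squarems X d S" and c: "c \<in> tensor_carrier X S"
  shows "tensor_map X S id c = c"
proof -
  interpret square_hom X d S X d S id
    by (rule square_homI[OF assms(1) assms(1) squams_hom_id])
  obtain z where "z \<in> Mset \<times> X" and "c = tensor_class X S (fst z) (snd z)"
    by (rule dom.tensor_carrier_cases[OF c])
  then show ?thesis
    using tensor_map_class_apsnd by simp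
qed

lemma tensor_map_comp:
  assumes X: "squarems X dX SX" and Y: "squarems Y dY SY" and Z: "squarems Z dZ SZ"
    and f: "squams_hom X dX SX Y dY SY f" and g: "squams_hom Y dY SY Z dZ SZ g"
    and c: "c \<in> tensor_carrier X SX"
  shows "tensor_map Z SZ (g \<circ> f) c = tensor_map Z SZ g (tensor_map Y SY f c)"
proof -
  interpret f: square_hom X dX SX Y dY SY f
    by (rule square_homI[OF X Y f])
  interpret g: square_hom Y dY SY Z dZ SZ g
    by (rule square_homI[OF Y Z g])
  interpret gf: square_hom X dX SX Z dZ SZ "g \<circ> f"
    by (rule square_homI[OF X Z squams_hom_comp[OF f g]])
  obtain z where z: "z \<in> Mset \<times> X" and cz: "c = tensor_class X SX (fst z) (snd z)"
    by (rule f.dom.tensor_carrier_cases[OF c])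
  have m: "fst z \<in> Mset" and x: "snd z \<in> X"
    using z by (auto simp: mem_Times_iff)
  show ?thesis
    unfolding cz f.tensor_map_class[OF m x] g.tensor_map_class[OF m f.f_in_Y[OF x]]
      gf.tensor_map_class[OF m x] by simp
qed

theorem mainTheorem10:
  shows
  "(\<forall>(X :: 'a set) d S. squarems X d S \<longrightarrow>
      metric_on (tensor_carrier X S) (tensor_dist X d S) \<and>
      (\<forall>z\<in>Mset \<times> X. \<forall>w\<in>Mset \<times> X.
         tensor_dist X d S (tensor_class X S (fst z) (snd z)) (tensor_class X S (fst w) (snd w))
           = rep_dist X d S z w) \<and>
      (\<forall>p\<in>M0. \<forall>m\<in>Mset. p \<in> cell m \<longrightarrow>
         tensor_S X S p = tensor_class X S m (S (3 * fst p - fst m, 3 * snd p - snd m))) \<and>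
      squarems (tensor_carrier X S) (tensor_dist X d S) (tensor_S X S) \<and>
      (\<forall>c\<in>tensor_carrier X S. tensor_map X S id c = c))
   \<and>
   (\<forall>(X :: 'a set) dX SX (Y :: 'b set) dY SY f.
      squarems X dX SX \<and> squarems Y dY SY \<and> squams_hom X dX SX Y dY SY f \<longrightarrow>
      (\<forall>m\<in>Mset. \<forall>x\<in>X. tensor_map Y SY f (tensor_class X SX m x) = tensor_class Y SY m (f x)) \<and>
      squams_hom (tensor_carrier X SX) (tensor_dist X dX SX) (tensor_S X SX)
                 (tensor_carrier Y SY) (tensor_dist Y dY SY) (tensor_S Y SY)
                 (tensor_map Y SY f))
   \<and>
   (\<forall>(X :: 'a set) dX SX (Y :: 'b set) dY SY (Z :: 'c set) dZ SZ f g.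
      squarems X dX SX \<and> squarems Y dY SY \<and> squarems Z dZ SZ \<and>
      squams_hom X dX SX Y dY SY f \<and> squams_hom Y dY SY Z dZ SZ g \<longrightarrow>
      (\<forall>c\<in>tensor_carrier X SX.
         tensor_map Z SZ (g \<circ> f) c = tensor_map Z SZ g (tensor_map Y SY f c)))"
proof (intro conjI allI impI)
  fix X :: "'a set" and d S
  assume sq: "squarems X d S"
  interpret square_metric_space X d S
    by (rule square_metric_space.intro[OF sq])
  show "metric_on (tensor_carrier X S) (tensor_dist X d S)"
    by (rule tensor_metric)
  show "\<forall>z\<in>Mset \<times> X. \<forall>w\<in>Mset \<times> X.
      tensor_dist X d S (tensor_class X S (fst z) (snd z)) (tensor_class X S (fst w) (snd w))
        = rep_dist X d S z w"
    using tensor_dist_class by blast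
  show "\<forall>p\<in>M0. \<forall>m\<in>Mset. p \<in> cell m \<longrightarrow>
      tensor_S X S p = tensor_class X S m (S (3 * fst p - fst m, 3 * snd p - snd m))"
    using tensor_S_eq by blast
  show "squarems (tensor_carrier X S) (tensor_dist X d S) (tensor_S X S)"
    by (rule tensor_squarems)
  show "\<forall>c\<in>tensor_carrier X S. tensor_map X S id c = c"
    using tensor_map_id[OF sq] by blast
next
  fix X :: "'a set" and dX SX and Y :: "'b set" and dY SY f
  assume "squarems X dX SX \<and> squarems Y dY SY \<and> squams_hom X dX SX Y dY SY f"
  then interpret square_hom X dX SX Y dY SY f
    by (intro square_homI) auto
  show "\<forall>m\<in>Mset. \<forall>x\<in>X. tensor_map Y SY f (tensor_class X SX m x) = tensor_class Y SY m (f x)"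
    using tensor_map_class by blast
  show "squams_hom (tensor_carrier X SX) (tensor_dist X dX SX) (tensor_S X SX)
      (tensor_carrier Y SY) (tensor_dist Y dY SY) (tensor_S Y SY) (tensor_map Y SY f)"
    by (rule tensor_map_hom)
next
  fix X :: "'a set" and dX SX and Y :: "'b set" and dY SY and Z :: "'c set" and dZ SZ f g
  assume "squarems X dX SX \<and> squarems Y dY SY \<and> squarems Z dZ SZ \<and>
    squams_hom X dX SX Y dY SY f \<and> squams_hom Y dY SY Z dZ SZ g"
  then show "\<forall>c\<in>tensor_carrier X SX. tensor_map Z SZ (g \<circ> f) c = tensor_map Z SZ g (tensor_map Y SY f c)"
    using tensor_map_comp by blast
qed

end
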